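(* There is a constant $c>0$ such that, for every $n$, if the adversary generating the dynamic graphs $G_1=(V,E_1),G_2=(V,E_2),\dots$ on $n$ nodes is allowed to choose the edge sets $E_1,E_2,\dots$ adaptively without having to preserve node degrees, then there is such an adaptive adversary and an initial assignment of opinions for which the expected consensus time of the standard voter model is at least $\Omega\big((n/c)^{n/c}\big)$.
   Context: Standard voter model on a sequence of graphs $G_1,G_2,\dots$ on a common vertex set $V$ of $n$ nodes: every node initially holds an opinion; in each synchronous round $t$, every node independently chooses a neighbour in $G_t$ uniformly at random and with probability $1/2$ adopts that neighbour's opinion (as at the start of the round), otherwise keeps its own. An adaptive adversary chooses $G_{t+1}$ knowing the opinions of all nodes up to round $t$. The consensus time is the first round after which all nodes hold the same opinion. *)

theory Defs
  imports "HOL-Probability.Probability"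
begin

text \<open>Vertex set V = {0..<n}; opinions are natural numbers; a configuration
  assigns an opinion to every node (values outside V are irrelevant).
  A graph on V is an edge set E of ordered pairs.\<close>

type_synonym config = "nat \<Rightarrow> nat"
type_synonym graph = "(nat \<times> nat) set"

definition vertices :: "nat \<Rightarrow> nat set" where
  "vertices n = {..<n}"

text \<open>Admissible graph: simple undirected (symmetric, loop-free) graph on V that
  is connected. No constraint on degrees.\<close>
definition valid_graph :: "nat \<Rightarrow> graph \<Rightarrow> bool" where
  "valid_graph n E \<longleftrightarrow>
     E \<subseteq> vertices n \<times> vertices n \<and> sym E \<and> (\<forall>v. (v, v) \<notin> E) \<and>
     (\<forall>u\<in>vertices n. \<forall>v\<in>vertices n. (u, v) \<in> E\<^sup>*)"

definition nbrs :: "graph \<Rightarrow> nat \<Rightarrow> nat set" where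
  "nbrs E v = {u. (v, u) \<in> E}"

definition node_update :: "graph \<Rightarrow> config \<Rightarrow> nat \<Rightarrow> nat pmf" where
  "node_update E x v =
     bind_pmf (bernoulli_pmf (1/2))
       (\<lambda>b. if b then map_pmf x (pmf_of_set (nbrs E v)) else return_pmf (x v))"

definition voter_round :: "nat \<Rightarrow> graph \<Rightarrow> config \<Rightarrow> config pmf" where
  "voter_round n E x = Pi_pmf (vertices n) 0 (node_update E x)"

text \<open>A (deterministic) adaptive adversary maps the history of configurations
  [x_0, ..., x_t] to the graph G_(t+1) used in round t+1.\<close>
type_synonym adversary = "config list \<Rightarrow> graph"

definition valid_adversary :: "nat \<Rightarrow> adversary \<Rightarrow> bool" where
  "valid_adversary n adv \<longleftrightarrow> (\<forall>h. valid_graph n (adv h))"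

fun history :: "nat \<Rightarrow> adversary \<Rightarrow> config \<Rightarrow> nat \<Rightarrow> config list pmf" where
  "history n adv x0 0 = return_pmf [x0]"
| "history n adv x0 (Suc t) =
     bind_pmf (history n adv x0 t)
       (\<lambda>h. map_pmf (\<lambda>y. h @ [y]) (voter_round n (adv h) (last h)))"

definition consensus :: "nat \<Rightarrow> config \<Rightarrow> bool" where
  "consensus n x \<longleftrightarrow> (\<forall>u\<in>vertices n. \<forall>v\<in>vertices n. x u = x v)"

text \<open>P(T > t): no consensus at any of the times 0..t.\<close>
definition prob_not_consensus_by :: "nat \<Rightarrow> adversary \<Rightarrow> config \<Rightarrow> nat \<Rightarrow> real" where
  "prob_not_consensus_by n adv x0 t =
     measure_pmf.prob (history n adv x0 t) {h. \<forall>s\<le>t. \<not> consensus n (h ! s)}"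

text \<open>Expected consensus time E[T] = sum_(t>=0) P(T > t) (in [0, \<infinity>]).\<close>
definition expected_consensus_time :: "nat \<Rightarrow> adversary \<Rightarrow> config \<Rightarrow> ennreal" where
  "expected_consensus_time n adv x0 = (\<Sum>t. ennreal (prob_not_consensus_by n adv x0 t))"

end

theory Submission
  imports Defs
begin

text \<open>
  The adversary always presents the barbell graph: a star on the minority opinion class and a
  star on the majority class, joined by a single bridge from the minority centre to a majority
  leaf. Every node except the two ends of the bridge sees only its own opinion, so in a round
  the minority size m changes by at most one: it drops with probability 3/(8m) and grows with
  probability (2m-1)/(8m). The potential of m, the sum of 3^(j-1)/(j-1)! over m < j <= n/2,
  is therefore a supermartingale up to an additive error of 3^(n/2-1)/(n/2-1)! per round. It
  starts at 0 from a balanced configuration and is at least 1 once consensus has been reached,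
  so consensus by time t has probability at most t 3^(n/2-1)/(n/2-1)!, and the expected
  consensus time is at least of order (n/2-1)!/3^(n/2), which exceeds (n/40)^(n/40).
\<close>

section \<open>Graphs and single rounds\<close>

lemma valid_graphI:
  assumes "E \<subseteq> vertices n \<times> vertices n" "sym E" "\<And>v. (v, v) \<notin> E"
    and root: "\<And>v. v \<in> vertices n \<Longrightarrow> (r, v) \<in> E\<^sup>*"
  shows "valid_graph n E"
  unfolding valid_graph_def
proof (intro conjI ballI allI)
  fix u v assume "u \<in> vertices n" "v \<in> vertices n"
  then have "(r, u) \<in> E\<^sup>*" "(r, v) \<in> E\<^sup>*" by (simp_all add: root)
  moreover have "(E\<inverse>)\<^sup>* = E\<^sup>*" using \<open>sym E\<close> by (simp add: sym_conv_converse_eq)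
  ultimately have "(u, r) \<in> E\<^sup>*" by (metis converse_iff rtrancl_converse)
  then show "(u, v) \<in> E\<^sup>*" using \<open>(r, v) \<in> E\<^sup>*\<close> by (rule rtrancl_trans)
qed (use assms in auto)

lemma nbrs_subset_vertices: "valid_graph n E \<Longrightarrow> nbrs E v \<subseteq> {..<n}"
  by (auto simp: valid_graph_def nbrs_def vertices_def)

lemma finite_nbrs: "valid_graph n E \<Longrightarrow> finite (nbrs E v)"
  using finite_subset[OF nbrs_subset_vertices] by blast

lemma nbrs_nonempty:
  assumes "valid_graph n E" "2 \<le> n" "v < n"
  shows "nbrs E v \<noteq> {}"
proof -
  define u where "u = (if v = 0 then 1 else 0::nat)"
  have "u < n" "u \<noteq> v" using assms by (auto simp: u_def)
  then have "(v, u) \<in> E\<^sup>*" using assms by (simp add: valid_graph_def vertices_def)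
  then obtain w where "(v, w) \<in> E" using \<open>u \<noteq> v\<close> by (cases rule: converse_rtranclE) auto
  then show ?thesis by (auto simp: nbrs_def)
qed

definition star_graph :: "nat set \<Rightarrow> nat \<Rightarrow> graph" where
  "star_graph A c = {(c, v) | v. v \<in> A \<and> v \<noteq> c} \<union> {(v, c) | v. v \<in> A \<and> v \<noteq> c}"

lemma star_graph_subset: "c \<in> B \<Longrightarrow> A \<subseteq> B \<Longrightarrow> star_graph A c \<subseteq> B \<times> B"
  by (auto simp: star_graph_def)

lemma sym_star_graph: "sym (star_graph A c)"
  by (auto simp: star_graph_def sym_def)

lemma star_graph_irrefl: "(v, v) \<notin> star_graph A c"
  by (auto simp: star_graph_def)

lemma star_graph_reach: "v \<in> A \<Longrightarrow> (c, v) \<in> (star_graph A c)\<^sup>*"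
  by (cases "v = c") (auto simp: star_graph_def intro: r_into_rtrancl)

lemma nn_integral_node_update:
  assumes "finite (nbrs E v)" "nbrs E v \<noteq> {}" "\<And>z. 0 \<le> g z"
  shows "(\<integral>\<^sup>+z. ennreal (g z) \<partial>node_update E x v) =
         ennreal (g (x v) / 2 + (\<Sum>u\<in>nbrs E v. g (x u)) / (2 * card (nbrs E v)))"
proof -
  let ?avg = "(\<Sum>u\<in>nbrs E v. g (x u)) / card (nbrs E v)"
  have avg: "0 \<le> ?avg" using assms(3) by (simp add: sum_nonneg)
  have "0 < card (nbrs E v)" using assms(1,2) by (simp add: card_gt_0_iff)
  then have "(\<integral>\<^sup>+z. ennreal (g z) \<partial>map_pmf x (pmf_of_set (nbrs E v))) = ennreal ?avg"
    using assms
    by (simp add: nn_integral_pmf_of_set sum_nonneg divide_ennreal ennreal_of_nat_eq_real_of_nat)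
  then have "(\<integral>\<^sup>+z. ennreal (g z) \<partial>node_update E x v) = ennreal ?avg / 2 + ennreal (g (x v)) / 2"
    by (simp add: node_update_def divide_ennreal_def mult.commute)
  also have "\<dots> = ennreal (?avg / 2 + g (x v) / 2)"
    using avg assms(3) by (simp add: ennreal_divide_numeral ennreal_plus)
  finally show ?thesis by (simp add: add.commute mult.commute)
qed
lemma node_update_eq_return:
  assumes "finite (nbrs E v)" "nbrs E v \<noteq> {}" "\<And>u. u \<in> nbrs E v \<Longrightarrow> x u = x v"
  shows "node_update E x v = return_pmf (x v)"
proof -
  have "map_pmf x (pmf_of_set (nbrs E v)) = map_pmf (\<lambda>_. x v) (pmf_of_set (nbrs E v))"
    using assms by (intro map_pmf_cong) auto
  then have "map_pmf x (pmf_of_set (nbrs E v)) = return_pmf (x v)" by simp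
  then show ?thesis unfolding node_update_def by (simp cong: if_cong)
qed

lemma set_pmf_node_update:
  assumes "finite (nbrs E v)" "nbrs E v \<noteq> {}"
  shows "set_pmf (node_update E x v) \<subseteq> insert (x v) (x ` nbrs E v)"
proof
  fix z assume "z \<in> set_pmf (node_update E x v)"
  then obtain c where "z \<in> set_pmf (if c then map_pmf x (pmf_of_set (nbrs E v)) else return_pmf (x v))"
    unfolding node_update_def by auto
  then show "z \<in> insert (x v) (x ` nbrs E v)" using assms by (cases c) auto
qed

lemma voter_round_preserves_range:
  assumes "valid_graph n E" "2 \<le> n" "y \<in> set_pmf (voter_round n E x)"
    and range: "\<forall>v<n. x v \<in> A"
  shows "\<forall>v<n. y v \<in> A"
proof (intro allI impI)
  fix v assume v: "v < n"
  have "y \<in> PiE_dflt (vertices n) 0 (set_pmf \<circ> node_update E x)"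
    using assms(3) by (simp add: voter_round_def vertices_def set_Pi_pmf)
  then have "y v \<in> set_pmf (node_update E x v)" using v by (auto simp: PiE_dflt_def vertices_def)
  then have "y v \<in> insert (x v) (x ` nbrs E v)"
    using set_pmf_node_update finite_nbrs nbrs_nonempty assms(1,2) v by blast
  then show "y v \<in> A" using range v nbrs_subset_vertices[OF assms(1), of v] by fastforce
qed

lemma voter_round_consensus:
  assumes E: "valid_graph n E" "2 \<le> n" and "consensus n x"
  shows "voter_round n E x = return_pmf (\<lambda>v. if v < n then x v else 0)"
proof -
  have "node_update E x v = return_pmf (x v)" if "v < n" for v
  proof (rule node_update_eq_return)
    show "finite (nbrs E v)" "nbrs E v \<noteq> {}" using E that by (simp_all add: finite_nbrs nbrs_nonempty)
    show "x u = x v" if "u \<in> nbrs E v" for u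
    proof -
      have "u < n" using nbrs_subset_vertices[OF E(1)] that by blast
      then show ?thesis using \<open>consensus n x\<close> \<open>v < n\<close> unfolding consensus_def vertices_def by blast
    qed
  qed
  then have "voter_round n E x = Pi_pmf {..<n} 0 (\<lambda>v. return_pmf (x v))"
    unfolding voter_round_def vertices_def by (intro Pi_pmf_cong) simp_all
  then show ?thesis by simp
qed

lemma nn_integral_voter_round_two_active:
  assumes E: "valid_graph n E" "2 \<le> n" and ab: "a < n" "b < n" "a \<noteq> b"
    and frozen: "\<And>v u. v < n \<Longrightarrow> v \<noteq> a \<Longrightarrow> v \<noteq> b \<Longrightarrow>
      u \<in> nbrs E v \<Longrightarrow> x u = x v"
  shows "(\<integral>\<^sup>+y. f y \<partial>voter_round n E x) =
    (\<integral>\<^sup>+u. \<integral>\<^sup>+w. f ((\<lambda>v. if v < n then x v else 0)(b := w, a := u))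
       \<partial>node_update E x b \<partial>node_update E x a)"
proof -
  define R where "R = {..<n} - {a, b}"
  define r where "r = (\<lambda>v. if v \<in> R then x v else 0::nat)"
  have V: "vertices n = insert a (insert b R)" using ab by (auto simp: R_def vertices_def)
  have R: "a \<notin> insert b R" "b \<notin> R" "finite R" using ab by (auto simp: R_def)
  have "Pi_pmf R 0 (node_update E x) = Pi_pmf R 0 (\<lambda>v. return_pmf (x v))"
    using E frozen by (intro Pi_pmf_cong node_update_eq_return finite_nbrs nbrs_nonempty)
      (auto simp: R_def)
  then have "Pi_pmf R 0 (node_update E x) = return_pmf r" using R by (simp add: r_def)
  then have "voter_round n E x = map_pmf (\<lambda>(u, g). g(a := u)) (pair_pmf (node_update E x a)
      (map_pmf (\<lambda>(w, g). g(b := w)) (pair_pmf (node_update E x b) (return_pmf r))))"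
    unfolding voter_round_def V using R by (simp add: Pi_pmf_insert)
  moreover have "r(b := w, a := u) = (\<lambda>v. if v < n then x v else 0)(b := w, a := u)" for u w
    by (auto simp: r_def R_def)
  ultimately show ?thesis by (simp add: nn_integral_pair_pmf' case_prod_beta)
qed


section \<open>The adversary\<close>

text \<open>All opinions other than 1 are lumped together; on the binary configurations that
  actually occur, non_ones is the class of opinion 0.\<close>
definition ones :: "nat \<Rightarrow> config \<Rightarrow> nat set" where
  "ones n x = {v. v < n \<and> x v = 1}"

definition non_ones :: "nat \<Rightarrow> config \<Rightarrow> nat set" where
  "non_ones n x = {v. v < n \<and> x v \<noteq> 1}"

definition minority :: "nat \<Rightarrow> config \<Rightarrow> nat set" where
  "minority n x = (if card (ones n x) \<le> card (non_ones n x) then ones n x else non_ones n x)"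

definition majority :: "nat \<Rightarrow> config \<Rightarrow> nat set" where
  "majority n x = (if card (ones n x) \<le> card (non_ones n x) then non_ones n x else ones n x)"

definition minority_size :: "nat \<Rightarrow> config \<Rightarrow> nat" where
  "minority_size n x = card (minority n x)"

definition barbell :: "nat \<Rightarrow> config \<Rightarrow> graph" where
  "barbell n x = (if minority n x = {} then star_graph {..<n} 0 else
     star_graph (minority n x) (Min (minority n x)) \<union> star_graph (majority n x) (Min (majority n x)) \<union>
     {(Max (majority n x), Min (minority n x)), (Min (minority n x), Max (majority n x))})"

definition barbell_adversary :: "nat \<Rightarrow> adversary" where
  "barbell_adversary n h = barbell n (last h)"

lemma ones_non_ones:
  "ones n x \<inter> non_ones n x = {}" "ones n x \<union> non_ones n x = {..<n}"
  "finite (ones n x)" "finite (non_ones n x)"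
  by (auto simp: ones_def non_ones_def)

lemma minority_majority:
  "minority n x \<inter> majority n x = {}" "minority n x \<union> majority n x = {..<n}"
  "finite (minority n x)" "finite (majority n x)"
  "card (minority n x) + card (majority n x) = n" "card (minority n x) \<le> card (majority n x)"
  using ones_non_ones[of n x] card_Un_disjoint[of "ones n x" "non_ones n x"]
  unfolding minority_def majority_def by (simp_all add: Un_commute Int_commute)

lemma card_non_ones: "card (non_ones n x) = n - card (ones n x)"
  using ones_non_ones[of n x] card_Un_disjoint[of "ones n x" "non_ones n x"] by simp

lemma minority_size_eq_min: "minority_size n x = min (card (ones n x)) (n - card (ones n x))"
  by (simp add: minority_size_def minority_def card_non_ones)

lemma minority_size_cong: "(\<And>v. v < n \<Longrightarrow> y v = x v) \<Longrightarrow> minority_size n y = minority_size n x"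
proof -
  assume "\<And>v. v < n \<Longrightarrow> y v = x v"
  then have "ones n y = ones n x" by (auto simp: ones_def)
  then show ?thesis by (simp add: minority_size_eq_min)
qed

lemma minority_empty_iff: "minority n x = {} \<longleftrightarrow> ones n x = {} \<or> non_ones n x = {}"
  using ones_non_ones(3,4)[of n x] by (auto simp: minority_def)

lemma consensus_imp_minority_empty:
  assumes "consensus n x"
  shows "minority n x = {}"
proof (cases "ones n x = {}")
  case False
  then obtain u where u: "u < n" "x u = 1" by (auto simp: ones_def)
  have "x v = 1" if "v < n" for v
    using assms u that unfolding consensus_def vertices_def by (metis lessThan_iff)
  then have "non_ones n x = {}" by (auto simp: non_ones_def)
  then show ?thesis by (simp add: minority_empty_iff)
qed (simp add: minority_empty_iff)

lemma minority_empty_imp_consensus: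
  assumes binary: "\<forall>v<n. x v \<in> {0,1}" and "minority n x = {}"
  shows "consensus n x"
proof -
  have "ones n x = {} \<or> non_ones n x = {}" using assms(2) by (simp add: minority_empty_iff)
  then have "(\<forall>v<n. x v = 0) \<or> (\<forall>v<n. x v = 1)"
    using binary by (auto simp: ones_def non_ones_def)
  then show ?thesis unfolding consensus_def vertices_def by auto
qed

lemma minority_constant:
  assumes binary: "\<forall>v<n. x v \<in> {0,1}" and "u \<in> minority n x" "v \<in> minority n x"
  shows "x u = x v"
proof -
  have "u < n" "v < n" using assms(2,3) minority_majority(2)[of n x] by auto
  then show ?thesis
    using binary[rule_format, of u] binary[rule_format, of v] assms(2,3)
    by (auto simp: minority_def ones_def non_ones_def split: if_splits)
qed

lemma majority_constant:
  assumes binary: "\<forall>v<n. x v \<in> {0,1}" and "u \<in> majority n x" "v \<in> majority n x"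
  shows "x u = x v"
proof -
  have "u < n" "v < n" using assms(2,3) minority_majority(2)[of n x] by auto
  then show ?thesis
    using binary[rule_format, of u] binary[rule_format, of v] assms(2,3)
    by (auto simp: majority_def ones_def non_ones_def split: if_splits)
qed

lemma minority_majority_differ:
  "u \<in> minority n x \<Longrightarrow> v \<in> majority n x \<Longrightarrow> x u \<noteq> x v"
  by (auto simp: minority_def majority_def ones_def non_ones_def split: if_splits)

lemma minority_size_eq_min_count:
  assumes "\<forall>v<n. y v \<in> {0,1}" "c \<in> {0,1}"
  shows "minority_size n y = min (card {v. v < n \<and> y v = c}) (n - card {v. v < n \<and> y v = c})"
proof (cases "c = 1")
  case True
  then show ?thesis by (simp add: minority_size_eq_min ones_def)
next
  case False
  then have "{v. v < n \<and> y v = c} = non_ones n y" using assms by (auto simp: non_ones_def)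
  moreover have "card (ones n y) \<le> n"
    using card_mono[of "{..<n}" "ones n y"] by (auto simp: ones_def)
  ultimately show ?thesis by (simp add: minority_size_eq_min card_non_ones min.commute)
qed

locale barbell_split =
  fixes n :: nat and x :: config
  assumes four_le: "4 \<le> n" and minority_nonempty: "minority n x \<noteq> {}"
begin

abbreviation "S \<equiv> minority n x"
abbreviation "T \<equiv> majority n x"
abbreviation "s0 \<equiv> Min S"
abbreviation "t0 \<equiv> Min T"
abbreviation "t1 \<equiv> Max T"

lemma card_minority_ge_1: "1 \<le> card S"
  using minority_nonempty minority_majority(3) by (simp add: Suc_le_eq card_gt_0_iff)

lemma card_majority_ge_2: "2 \<le> card T"
  using card_minority_ge_1 minority_majority(5,6)[of n x] four_le by linarith

lemma centres_mem: "s0 \<in> S" "t0 \<in> T" "t1 \<in> T"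
proof -
  have "T \<noteq> {}" using card_majority_ge_2 by auto
  then show "s0 \<in> S" "t0 \<in> T" "t1 \<in> T" using minority_nonempty minority_majority(3,4) by auto
qed

lemma t0_ne_t1: "t0 \<noteq> t1"
proof
  assume "t0 = t1"
  then have "T \<subseteq> {t1}" using minority_majority(4) by (metis Max_ge Min_le antisym singletonI subsetI)
  then show False using card_majority_ge_2 card_mono[of "{t1}" T] by auto
qed

lemma s0_ne_t1: "s0 \<noteq> t1"
  using centres_mem(1,3) minority_majority(1)[of n x] by (metis disjoint_iff)

lemma barbell_eq: "barbell n x = star_graph S s0 \<union> star_graph T t0 \<union> {(t1, s0), (s0, t1)}"
  using minority_nonempty by (simp add: barbell_def)

lemma barbell_vertices: "S \<subseteq> {..<n}" "T \<subseteq> {..<n}"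
  using minority_majority(2) by blast+

lemma valid_graph_barbell: "valid_graph n (barbell n x)"
  unfolding barbell_eq
proof (rule valid_graphI[where r = s0])
  let ?E = "star_graph S s0 \<union> star_graph T t0 \<union> {(t1, s0), (s0, t1)}"
  have "star_graph S s0 \<subseteq> {..<n} \<times> {..<n}" "star_graph T t0 \<subseteq> {..<n} \<times> {..<n}"
    using centres_mem barbell_vertices by (intro star_graph_subset; auto)+
  moreover have "{(t1, s0), (s0, t1)} \<subseteq> {..<n} \<times> {..<n}"
    using subsetD[OF barbell_vertices(1) centres_mem(1)] subsetD[OF barbell_vertices(2) centres_mem(3)]
    by simp
  ultimately show "?E \<subseteq> vertices n \<times> vertices n" unfolding vertices_def by (intro Un_least)
  show "sym ?E" using sym_star_graph[of S s0] sym_star_graph[of T t0] by (auto simp: sym_def)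
  show "(v, v) \<notin> ?E" for v using s0_ne_t1 by (auto simp: star_graph_irrefl)
  have sub: "(star_graph S s0)\<^sup>* \<subseteq> ?E\<^sup>*" "(star_graph T t0)\<^sup>* \<subseteq> ?E\<^sup>*"
    by (rule rtrancl_mono, blast)+
  fix v assume "v \<in> vertices n"
  show "(s0, v) \<in> ?E\<^sup>*"
  proof (cases "v \<in> S")
    case True
    then show ?thesis using sub(1) star_graph_reach by blast
  next
    case False
    then have "v \<in> T" using \<open>v \<in> vertices n\<close> minority_majority(2)[of n x] by (auto simp: vertices_def)
    have "(s0, t1) \<in> ?E" "(t1, t0) \<in> ?E"
      using centres_mem t0_ne_t1 by (auto simp: star_graph_def)
    then have "(s0, t0) \<in> ?E\<^sup>*" by (rule rtrancl_into_rtrancl[OF r_into_rtrancl])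
    moreover have "(t0, v) \<in> ?E\<^sup>*" using sub(2) star_graph_reach[OF \<open>v \<in> T\<close>] by blast
    ultimately show ?thesis by (rule rtrancl_trans)
  qed
qed

end

lemma valid_barbell: "4 \<le> n \<Longrightarrow> valid_graph n (barbell n x)"
proof (cases "minority n x = {}")
  case True
  assume "4 \<le> n"
  then show ?thesis using True star_graph_subset[of 0 "{..<n}" "{..<n}"] sym_star_graph star_graph_irrefl
      star_graph_reach[of _ "{..<n}" 0]
    by (intro valid_graphI[where r = 0]) (auto simp: barbell_def vertices_def)
next
  case False
  assume "4 \<le> n"
  then interpret barbell_split n x using False by unfold_locales
  show ?thesis by (rule valid_graph_barbell)
qed

lemma valid_barbell_adversary: "4 \<le> n \<Longrightarrow> valid_adversary n (barbell_adversary n)"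
  by (simp add: valid_adversary_def barbell_adversary_def valid_barbell)


section \<open>The potential\<close>

text \<open>The ratio weight (k + 1) = 3 * weight k / k is what makes the downward and upward
  moves of the minority size balance out in split_potential_drift.\<close>
definition weight :: "nat \<Rightarrow> real" where
  "weight j = 3 ^ (j - 1) / fact (j - 1)"

definition potential :: "nat \<Rightarrow> nat \<Rightarrow> real" where
  "potential n k = (\<Sum>j\<in>{k<..n div 2}. weight j)"

definition split_potential :: "nat \<Rightarrow> nat \<Rightarrow> real" where
  "split_potential n k = potential n (min k (n - k))"

lemma weight_pos: "0 < weight j"
  by (simp add: weight_def)

lemma weight_nonneg: "0 \<le> weight j"
  by (simp add: weight_def)

lemma weight_Suc: "1 \<le> k \<Longrightarrow> weight (Suc k) = 3 * weight k / k"
  by (cases k) (simp_all add: weight_def field_simps)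

lemma potential_nonneg: "0 \<le> potential n k"
  unfolding potential_def by (intro sum_nonneg weight_nonneg)

lemma potential_eq_0: "n div 2 \<le> k \<Longrightarrow> potential n k = 0"
  by (simp add: potential_def)

lemma potential_Suc: "k < n div 2 \<Longrightarrow> potential n k = potential n (Suc k) + weight (Suc k)"
proof -
  assume "k < n div 2"
  then have "{k<..n div 2} = insert (Suc k) {Suc k<..n div 2}" by auto
  then show ?thesis by (simp add: potential_def add.commute)
qed

lemma potential_antimono: "k \<le> l \<Longrightarrow> potential n l \<le> potential n k"
  unfolding potential_def by (intro sum_mono2) (auto intro: weight_nonneg)

lemma one_le_potential_0: "2 \<le> n \<Longrightarrow> 1 \<le> potential n 0"
  using potential_Suc[of 0 n] potential_nonneg[of n 1] by (simp add: weight_def)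

lemma split_potential_drift:
  fixes m n :: nat
  assumes m: "1 \<le> m" "m \<le> n div 2"
  shows "3 * split_potential n (m - 1) + (6 * real m - 2) * split_potential n m
           + (2 * real m - 1) * split_potential n (m + 1)
         \<le> 8 * real m * (split_potential n m + weight (n div 2))"
proof -
  define P where "P = potential n m"
  define D where "D = weight m"
  have D: "0 \<le> D" by (simp add: D_def weight_nonneg)
  have mins: "min m (n - m) = m" "min (m - 1) (n - (m - 1)) = m - 1" using m by simp_all
  then have Fm: "split_potential n m = P" and Fm1: "split_potential n (m - 1) = P + D"
    using m potential_Suc[of "m - 1" n] by (simp_all add: split_potential_def P_def D_def)
  show ?thesis
  proof (cases "m < n div 2")
    case True
    then have "min (m + 1) (n - (m + 1)) = m + 1" by simp
    then have "split_potential n (m + 1) = P - 3 * D / real m"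
      using True m potential_Suc[of m n] weight_Suc[of m]
      by (simp add: split_potential_def P_def D_def)
    moreover have "3 * (P + D) + (6 * real m - 2) * P + (2 * real m - 1) * (P - 3 * D / real m)
        = 8 * real m * P - 3 * D + 3 * D / real m"
      using m by (simp add: field_simps)
    ultimately have "3 * split_potential n (m - 1) + (6 * real m - 2) * split_potential n m
        + (2 * real m - 1) * split_potential n (m + 1) = 8 * real m * P - 3 * D + 3 * D / real m"
      using Fm Fm1 by simp
    also have "\<dots> \<le> 8 * real m * P" using m D by (simp add: divide_le_eq mult_le_cancel_left1)
    also have "\<dots> \<le> 8 * real m * (split_potential n m + weight (n div 2))"
      using Fm weight_nonneg by (intro mult_left_mono) auto
    finally show ?thesis .
  next
    case False
    then have "m = n div 2" using m by simp
    then have P: "P = 0" and "D = weight (n div 2)" by (simp_all add: P_def D_def potential_eq_0)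
    have "m - 1 \<le> min (m + 1) (n - (m + 1))" using \<open>m = n div 2\<close> by simp
    then have "split_potential n (m + 1) \<le> split_potential n (m - 1)"
      unfolding split_potential_def mins by (rule potential_antimono)
    then have "split_potential n (m + 1) \<le> D" using Fm1 P by simp
    then have "(2 * real m - 1) * split_potential n (m + 1) \<le> (2 * real m - 1) * D"
      using m by (intro mult_left_mono) auto
    moreover have "(2 * real m + 2) * D \<le> 8 * real m * D" using m D by (intro mult_right_mono) auto
    ultimately show ?thesis using Fm Fm1 P \<open>D = weight (n div 2)\<close> by (simp add: algebra_simps)
  qed
qed


section \<open>One round against the barbell adversary\<close>

lemma nbrs_two_stars:
  assumes "S \<inter> T = {}" "b \<in> S" "a \<in> T" "c \<in> T" "a \<noteq> c"
  defines "E \<equiv> star_graph S b \<union> star_graph T c \<union> {(a, b), (b, a)}"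
  shows "nbrs E a = {c, b}" "nbrs E b = insert a (S - {b})"
    "\<And>v. v \<in> S \<Longrightarrow> v \<noteq> b \<Longrightarrow> nbrs E v \<subseteq> S"
    "\<And>v. v \<in> T \<Longrightarrow> v \<noteq> a \<Longrightarrow> nbrs E v \<subseteq> T"
  using assms by (auto simp: nbrs_def star_graph_def)

locale binary_barbell = barbell_split +
  assumes binary: "\<forall>v<n. x v \<in> {0,1}"
begin

abbreviation "p \<equiv> x s0"
abbreviation "q \<equiv> x t1"
abbreviation "m \<equiv> card S"
abbreviation "E \<equiv> barbell n x"

lemma minority_opinion: "v \<in> S \<Longrightarrow> x v = p"
  using minority_constant[OF binary _ centres_mem(1)] .

lemma majority_opinion: "v \<in> T \<Longrightarrow> x v = q"
  using majority_constant[OF binary _ centres_mem(3)] .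

lemma opinions_differ: "q \<noteq> p"
  using minority_majority_differ[OF centres_mem(1,3)] by simp

lemma opinions_binary: "p \<in> {0,1}" "q \<in> {0,1}"
  using binary centres_mem barbell_vertices by blast+

lemma nbrs_barbell:
  "nbrs E t1 = {t0, s0}" "nbrs E s0 = insert t1 (S - {s0})"
  "\<And>v. v \<in> S \<Longrightarrow> v \<noteq> s0 \<Longrightarrow> nbrs E v \<subseteq> S"
  "\<And>v. v \<in> T \<Longrightarrow> v \<noteq> t1 \<Longrightarrow> nbrs E v \<subseteq> T"
  unfolding barbell_eq
  using nbrs_two_stars[OF minority_majority(1) centres_mem(1,3,2) t0_ne_t1[symmetric]] by simp_all

lemma t1_notin_minority: "t1 \<notin> S"
  using centres_mem(3) minority_majority(1)[of n x] by (metis disjoint_iff)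

lemma card_nbrs_s0: "card (nbrs E s0) = m"
  using nbrs_barbell(2) t1_notin_minority centres_mem(1) card_minority_ge_1 minority_majority(3)
  by (simp add: card_insert_if)

text \<open>Only the two endpoints of the bridge can change their opinion.\<close>
lemma nn_integral_voter_round_barbell:
  "(\<integral>\<^sup>+y. f y \<partial>voter_round n E x) =
     (\<integral>\<^sup>+u. \<integral>\<^sup>+w. f ((\<lambda>v. if v < n then x v else 0)(s0 := w, t1 := u))
        \<partial>node_update E x s0 \<partial>node_update E x t1)"
proof (rule nn_integral_voter_round_two_active)
  show "valid_graph n E" "2 \<le> n" using valid_graph_barbell four_le by simp_all
  show "t1 < n" "s0 < n" using centres_mem barbell_vertices by blast+
  show "t1 \<noteq> s0" using t1_notin_minority centres_mem(1) by metis
  fix v u assume v: "v < n" "v \<noteq> t1" "v \<noteq> s0" and u: "u \<in> nbrs E v"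
  have "v \<in> S \<or> v \<in> T" using v minority_majority(2)[of n x] by blast
  then show "x u = x v"
  proof
    assume "v \<in> S"
    then have "u \<in> S" using subsetD[OF nbrs_barbell(3) u] v by simp
    with \<open>v \<in> S\<close> show ?thesis by (metis minority_opinion)
  next
    assume "v \<in> T"
    then have "u \<in> T" using subsetD[OF nbrs_barbell(4) u] v by simp
    with \<open>v \<in> T\<close> show ?thesis by (metis majority_opinion)
  qed
qed

lemma nn_integral_node_update_s0:
  assumes "\<And>z. 0 \<le> g z"
  shows "(\<integral>\<^sup>+w. ennreal (g w) \<partial>node_update E x s0) =
           ennreal (g p / 2 + (g q + (real m - 1) * g p) / (2 * real m))"
proof -
  have "(\<Sum>z\<in>nbrs E s0. g (x z)) = g q + (\<Sum>z\<in>S - {s0}. g (x z))"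
    unfolding nbrs_barbell(2) using t1_notin_minority minority_majority(3) by simp
  also have "(\<Sum>z\<in>S - {s0}. g (x z)) = (\<Sum>z\<in>S - {s0}. g p)"
    by (intro sum.cong refl) (metis DiffD1 minority_opinion)
  also have "\<dots> = (real m - 1) * g p"
    using centres_mem(1) minority_majority(3) card_minority_ge_1 by (simp add: of_nat_diff)
  finally have sum_eq: "(\<Sum>z\<in>nbrs E s0. g (x z)) = g q + (real m - 1) * g p" .
  have "finite (nbrs E s0)" "nbrs E s0 \<noteq> {}"
    using nbrs_barbell(2) minority_majority(3) by auto
  from nn_integral_node_update[of E s0 g x, OF this assms] show ?thesis
    by (simp only: sum_eq card_nbrs_s0 of_nat_mult of_nat_numeral)
qed

lemma nn_integral_node_update_t1:
  assumes "\<And>z. 0 \<le> g z"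
  shows "(\<integral>\<^sup>+u. ennreal (g u) \<partial>node_update E x t1) = ennreal (g q / 2 + (g q + g p) / 4)"
proof -
  have "t0 \<noteq> s0" using centres_mem(1,2) minority_majority(1)[of n x] by (metis disjoint_iff)
  then have "(\<Sum>z\<in>nbrs E t1. g (x z)) = g q + g p" "card (nbrs E t1) = 2"
    unfolding nbrs_barbell(1) using majority_opinion[OF centres_mem(2)] by simp_all
  moreover have "finite (nbrs E t1)" "nbrs E t1 \<noteq> {}" unfolding nbrs_barbell(1) by simp_all
  ultimately show ?thesis using nn_integral_node_update[of E t1 g x] assms by simp
qed

lemma opinion_count_after_round:
  fixes u w :: nat
  defines "y \<equiv> (\<lambda>v. if v < n then x v else 0)(s0 := w, t1 := u)"
  shows "card {v. v < n \<and> y v = p} = (if w = p then m else m - 1) + (if u = p then 1 else 0)"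
proof -
  have "{v. v < n \<and> y v = p} = (if w = p then S else S - {s0}) \<union> (if u = p then {t1} else {})"
  proof (intro set_eqI iffI)
    fix v assume v: "v \<in> {v. v < n \<and> y v = p}"
    show "v \<in> (if w = p then S else S - {s0}) \<union> (if u = p then {t1} else {})"
    proof (cases "v = t1 \<or> v = s0")
      case True
      then show ?thesis using v centres_mem(1) s0_ne_t1 by (auto simp: y_def)
    next
      case False
      then have "x v = p" "v < n" using v by (auto simp: y_def)
      moreover have "v \<in> S \<or> v \<in> T" using \<open>v < n\<close> minority_majority(2)[of n x] by blast
      ultimately have "v \<in> S" using majority_opinion opinions_differ by metis
      then show ?thesis using False by auto
    qed
  next
    fix v assume v: "v \<in> (if w = p then S else S - {s0}) \<union> (if u = p then {t1} else {})"
    have "t1 < n" "s0 < n" using centres_mem(1,3) barbell_vertices by blast+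
    show "v \<in> {v. v < n \<and> y v = p}"
    proof (cases "v = t1")
      case True
      then have "u = p" using v t1_notin_minority by (auto split: if_splits)
      then show ?thesis using True \<open>t1 < n\<close> by (simp add: y_def)
    next
      case False
      then have "v \<in> S" "v = s0 \<longrightarrow> w = p" using v by (auto split: if_splits)
      moreover have "v < n" using \<open>v \<in> S\<close> barbell_vertices by blast
      moreover have "x v = p" using \<open>v \<in> S\<close> by (metis minority_opinion)
      ultimately show ?thesis using False by (auto simp: y_def)
    qed
  qed
  moreover have "card (if w = p then S else S - {s0}) = (if w = p then m else m - 1)"
    using centres_mem(1) minority_majority(3) by simp
  ultimately show ?thesis
    using t1_notin_minority minority_majority(3) by (simp add: card_Un_disjoint)
qed

lemma nn_integral_potential_barbell_round:
  "(\<integral>\<^sup>+y. ennreal (potential n (minority_size n y)) \<partial>voter_round n E x) =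
     ennreal ((3 * split_potential n (m - 1) + (6 * real m - 2) * split_potential n m
       + (2 * real m - 1) * split_potential n (m + 1)) / (8 * real m))"
proof -
  define y where "y u w = (\<lambda>v. if v < n then x v else 0)(s0 := w, t1 := u)" for u w :: nat
  define G where "G u w = potential n (minority_size n (y u w))" for u w
  define H where "H u = G u p / 2 + (G u q + (real m - 1) * G u p) / (2 * real m)" for u
  have G_nonneg: "0 \<le> G u w" for u w by (simp add: G_def potential_nonneg)
  have G: "G u w = split_potential n ((if w = p then m else m - 1) + (if u = p then 1 else 0))"
    if "u \<in> {0,1}" "w \<in> {0,1}" for u w
  proof -
    have "\<forall>v<n. y u w v \<in> {0,1}" using binary that by (simp add: y_def)
    then show ?thesis
      using minority_size_eq_min_count[OF _ opinions_binary(1)] opinion_count_after_round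
      by (simp add: G_def split_potential_def y_def)
  qed
  have "(\<integral>\<^sup>+y. ennreal (potential n (minority_size n y)) \<partial>voter_round n E x)
      = (\<integral>\<^sup>+u. \<integral>\<^sup>+w. ennreal (G u w) \<partial>node_update E x s0 \<partial>node_update E x t1)"
    by (simp add: nn_integral_voter_round_barbell G_def y_def)
  also have "\<dots> = (\<integral>\<^sup>+u. ennreal (H u) \<partial>node_update E x t1)"
    by (simp add: nn_integral_node_update_s0 G_nonneg H_def)
  also have "\<dots> = ennreal (H q / 2 + (H q + H p) / 4)"
    using G_nonneg card_minority_ge_1
    by (intro nn_integral_node_update_t1) (simp add: H_def add_nonneg_nonneg)
  also have "H q / 2 + (H q + H p) / 4 = (3 * split_potential n (m - 1)
      + (6 * real m - 2) * split_potential n m + (2 * real m - 1) * split_potential n (m + 1)) / (8 * real m)"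
    using opinions_differ opinions_binary card_minority_ge_1 by (simp add: H_def G field_simps)
  finally show ?thesis .
qed

end

lemma potential_drift_barbell:
  assumes "4 \<le> n" and binary: "\<forall>v<n. x v \<in> {0,1}"
  shows "(\<integral>\<^sup>+y. ennreal (potential n (minority_size n y)) \<partial>voter_round n (barbell n x) x)
           \<le> ennreal (potential n (minority_size n x) + weight (n div 2))"
proof (cases "minority n x = {}")
  case True
  then have "voter_round n (barbell n x) x = return_pmf (\<lambda>v. if v < n then x v else 0)"
    using assms valid_barbell minority_empty_imp_consensus by (intro voter_round_consensus) auto
  moreover have "minority_size n (\<lambda>v. if v < n then x v else 0) = minority_size n x"
    by (rule minority_size_cong) simp
  ultimately show ?thesis by (simp add: potential_nonneg weight_nonneg)
next
  case False
  interpret binary_barbell n x using assms False by unfold_locales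
  have m: "1 \<le> m" "m \<le> n div 2" using card_minority_ge_1 minority_majority(5,6)[of n x] by simp_all
  then have "split_potential n m = potential n (minority_size n x)"
    by (simp add: split_potential_def minority_size_def)
  moreover have "0 < 8 * real m" using m by simp
  ultimately show ?thesis
    unfolding nn_integral_potential_barbell_round using split_potential_drift[OF m]
    by (intro ennreal_leI) (simp add: pos_divide_le_eq mult.commute)
qed


section \<open>Histories and the consensus time\<close>

lemma history_length_range:
  assumes adv: "valid_adversary n adv" "2 \<le> n" and range: "\<forall>v<n. x0 v \<in> A"
  shows "h \<in> set_pmf (history n adv x0 t) \<Longrightarrow> length h = Suc t \<and> (\<forall>v<n. last h v \<in> A)"
proof (induction t arbitrary: h)
  case 0
  then show ?case using range by simp
next
  case (Suc t)
  then obtain h' y where h': "h' \<in> set_pmf (history n adv x0 t)" "h = h' @ [y]"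
    "y \<in> set_pmf (voter_round n (adv h') (last h'))" by auto
  then have "length h' = Suc t" "\<forall>v<n. last h' v \<in> A" using Suc.IH by auto
  moreover have "valid_graph n (adv h')" using adv by (simp add: valid_adversary_def)
  ultimately show ?case using h' voter_round_preserves_range adv(2) by auto
qed

lemma nn_integral_history_le:
  assumes step: "\<And>t h. h \<in> set_pmf (history n adv x0 t) \<Longrightarrow>
      (\<integral>\<^sup>+y. ennreal (\<Psi> (h @ [y])) \<partial>voter_round n (adv h) (last h)) \<le> ennreal (\<Psi> h + d)"
    and nonneg: "\<And>h. 0 \<le> \<Psi> h" "0 \<le> d"
  shows "(\<integral>\<^sup>+h. ennreal (\<Psi> h) \<partial>history n adv x0 t) \<le> ennreal (\<Psi> [x0] + real t * d)"
proof (induction t)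
  case 0
  then show ?case by simp
next
  case (Suc t)
  let ?H = "history n adv x0 t"
  have "(\<integral>\<^sup>+h. ennreal (\<Psi> h) \<partial>history n adv x0 (Suc t))
      = (\<integral>\<^sup>+h. (\<integral>\<^sup>+y. ennreal (\<Psi> (h @ [y])) \<partial>voter_round n (adv h) (last h)) \<partial>?H)"
    by (simp add: nn_integral_bind_pmf nn_integral_map_pmf)
  also have "\<dots> \<le> (\<integral>\<^sup>+h. ennreal (\<Psi> h) + ennreal d \<partial>?H)"
    using step nonneg by (intro nn_integral_mono_AE) (simp add: AE_measure_pmf_iff ennreal_plus)
  also have "\<dots> = (\<integral>\<^sup>+h. ennreal (\<Psi> h) \<partial>?H) + ennreal d"
    by (simp add: nn_integral_add measure_pmf.emeasure_space_1)
  also have "\<dots> \<le> ennreal (\<Psi> [x0] + real t * d) + ennreal d"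
    using Suc.IH by (rule add_right_mono)
  also have "\<dots> = ennreal (\<Psi> [x0] + real t * d + d)"
    using nonneg by (simp add: ennreal_plus)
  also have "\<Psi> [x0] + real t * d + d = \<Psi> [x0] + real (Suc t) * d"
    by (simp add: algebra_simps)
  finally show ?case .
qed

text \<open>Markov's inequality for the potential, which is at least 1 once consensus occurred.\<close>
lemma prob_not_consensus_by_ge:
  assumes step: "\<And>t h. h \<in> set_pmf (history n adv x0 t) \<Longrightarrow>
      (\<integral>\<^sup>+y. ennreal (\<Psi> (h @ [y])) \<partial>voter_round n (adv h) (last h)) \<le> ennreal (\<Psi> h + d)"
    and nonneg: "\<And>h. 0 \<le> \<Psi> h" "0 \<le> d" and init: "\<Psi> [x0] = 0"
    and consensus: "\<And>h. h \<in> set_pmf (history n adv x0 t) \<Longrightarrow>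
      \<exists>s\<le>t. consensus n (h ! s) \<Longrightarrow> 1 \<le> \<Psi> h"
  shows "1 - real t * d \<le> prob_not_consensus_by n adv x0 t"
proof -
  let ?H = "history n adv x0 t"
  define A where "A = {h. \<exists>s\<le>t. consensus n (h ! s)}"
  have "emeasure (measure_pmf ?H) A = (\<integral>\<^sup>+h. indicator A h \<partial>?H)" by simp
  also have "\<dots> \<le> (\<integral>\<^sup>+h. ennreal (\<Psi> h) \<partial>?H)"
    using consensus nonneg(1)
    by (intro nn_integral_mono_AE) (auto simp: AE_measure_pmf_iff A_def indicator_def)
  also have "\<dots> \<le> ennreal (real t * d)"
    using nn_integral_history_le[of n adv x0 \<Psi> d t, OF step nonneg] init by simp
  finally have "measure (measure_pmf ?H) A \<le> real t * d"
    using nonneg by (simp add: measure_pmf.emeasure_eq_measure)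
  moreover have "{h. \<forall>s\<le>t. \<not> consensus n (h ! s)} = UNIV - A" by (auto simp: A_def)
  then have "prob_not_consensus_by n adv x0 t = 1 - measure (measure_pmf ?H) A"
    unfolding prob_not_consensus_by_def using measure_pmf.prob_compl[of A ?H] by simp
  ultimately show ?thesis by simp
qed

lemma expected_consensus_time_ge:
  assumes prob: "\<And>t. 1 - real t * d \<le> prob_not_consensus_by n adv x0 t" and "0 < d"
  shows "ennreal (1 / (4 * d) - 1 / 2) \<le> expected_consensus_time n adv x0"
proof -
  define N where "N = nat \<lfloor>1 / (2 * d)\<rfloor>"
  have "real N = of_int \<lfloor>1 / (2 * d)\<rfloor>" using \<open>0 < d\<close> by (simp add: N_def)
  then have N: "1 / (2 * d) - 1 \<le> real N" "real N \<le> 1 / (2 * d)" by linarith+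
  have "1 / (4 * d) - 1 / 2 \<le> (\<Sum>t<N. 1 / 2)" using N(1) \<open>0 < d\<close> by (simp add: field_simps)
  also have "\<dots> \<le> (\<Sum>t<N. prob_not_consensus_by n adv x0 t)"
  proof (intro sum_mono)
    fix t assume "t \<in> {..<N}"
    then have "real t * d \<le> real N * d" using \<open>0 < d\<close> by (intro mult_right_mono) auto
    also have "\<dots> \<le> 1 / 2" using N(2) \<open>0 < d\<close> by (simp add: field_simps)
    finally show "1 / 2 \<le> prob_not_consensus_by n adv x0 t" using prob[of t] by linarith
  qed
  finally have "ennreal (1 / (4 * d) - 1 / 2) \<le> (\<Sum>t<N. ennreal (prob_not_consensus_by n adv x0 t))"
    by (simp add: ennreal_leI sum_ennreal prob_not_consensus_by_def)
  also have "\<dots> \<le> expected_consensus_time n adv x0"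
    unfolding expected_consensus_time_def by (intro sum_le_suminf) auto
  finally show ?thesis .
qed


section \<open>The lower bound\<close>

definition consensus_potential :: "nat \<Rightarrow> config list \<Rightarrow> real" where
  "consensus_potential n h =
     (if \<exists>s<length h. consensus n (h ! s) then 1 else potential n (minority_size n (last h)))"

lemma consensus_potential_nonneg: "0 \<le> consensus_potential n h"
  by (simp add: consensus_potential_def potential_nonneg)

lemma consensus_potential_step:
  assumes n: "4 \<le> n" and binary: "\<forall>v<n. last h v \<in> {0,1}"
  shows "(\<integral>\<^sup>+y. ennreal (consensus_potential n (h @ [y]))
             \<partial>voter_round n (barbell_adversary n h) (last h))
           \<le> ennreal (consensus_potential n h + weight (n div 2))"
proof (cases "\<exists>s<length h. consensus n (h ! s)")
  case True
  then have "consensus_potential n (h @ [y]) = 1" for y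
    by (auto simp: consensus_potential_def nth_append)
  then show ?thesis
    using True by (simp add: consensus_potential_def weight_nonneg measure_pmf.emeasure_space_1)
next
  case False
  have "consensus_potential n (h @ [y]) \<le> potential n (minority_size n y)" for y
  proof (cases "consensus n y")
    case True
    then have "minority_size n y = 0" by (simp add: minority_size_def consensus_imp_minority_empty)
    then show ?thesis using one_le_potential_0[of n] n by (simp add: consensus_potential_def)
  next
    case False
    with \<open>\<not> (\<exists>s<length h. consensus n (h ! s))\<close> show ?thesis
      by (auto simp: consensus_potential_def nth_append less_Suc_eq)
  qed
  then have "(\<integral>\<^sup>+y. ennreal (consensus_potential n (h @ [y]))
        \<partial>voter_round n (barbell_adversary n h) (last h))
      \<le> (\<integral>\<^sup>+y. ennreal (potential n (minority_size n y)) \<partial>voter_round n (barbell n (last h)) (last h))"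
    by (auto simp: barbell_adversary_def intro!: nn_integral_mono ennreal_leI)
  also have "\<dots> \<le> ennreal (potential n (minority_size n (last h)) + weight (n div 2))"
    by (rule potential_drift_barbell[OF n binary])
  also have "potential n (minority_size n (last h)) = consensus_potential n h"
    by (simp only: consensus_potential_def if_not_P[OF False])
  finally show ?thesis .
qed

definition half_split :: "nat \<Rightarrow> config" where
  "half_split n v = (if v < n div 2 then 1 else 0)"

lemma half_split_binary: "\<forall>v<n. half_split n v \<in> {0,1}"
  by (simp add: half_split_def)

lemma minority_size_half_split: "minority_size n (half_split n) = n div 2"
proof -
  have "ones n (half_split n) = {..<n div 2}" by (auto simp: ones_def half_split_def)
  then show ?thesis by (simp add: minority_size_eq_min)
qed

lemma not_consensus_half_split: "2 \<le> n \<Longrightarrow> \<not> consensus n (half_split n)"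
  using minority_size_half_split[of n] consensus_imp_minority_empty[of n "half_split n"]
  by (auto simp: minority_size_def)

lemma expected_consensus_time_barbell:
  assumes n: "4 \<le> n"
  shows "ennreal (1 / (4 * weight (n div 2)) - 1 / 2)
           \<le> expected_consensus_time n (barbell_adversary n) (half_split n)"
proof (rule expected_consensus_time_ge[OF prob_not_consensus_by_ge])
  let ?adv = "barbell_adversary n" and ?x0 = "half_split n"
  note reachable = history_length_range[OF valid_barbell_adversary[OF n] _ half_split_binary]
  show "(\<integral>\<^sup>+y. ennreal (consensus_potential n (h @ [y])) \<partial>voter_round n (?adv h) (last h))
          \<le> ennreal (consensus_potential n h + weight (n div 2))"
    if "h \<in> set_pmf (history n ?adv ?x0 t)" for t h
    using reachable[OF _ that] n by (intro consensus_potential_step) auto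
  show "1 \<le> consensus_potential n h"
    if "h \<in> set_pmf (history n ?adv ?x0 t)" "\<exists>s\<le>t. consensus n (h ! s)" for t h
    using reachable[OF _ that(1)] that(2) n by (auto simp: consensus_potential_def less_Suc_eq_le)
  show "consensus_potential n [?x0] = 0"
    using n not_consensus_half_split
    by (simp add: consensus_potential_def minority_size_half_split potential_eq_0)
qed (simp_all add: consensus_potential_nonneg weight_nonneg weight_pos)

lemma power_div_fact_le_exp:
  fixes x :: real
  assumes "0 \<le> x"
  shows "x ^ k / fact k \<le> exp x"
proof -
  have "summable (\<lambda>i. x ^ i / fact i)" "(\<Sum>i. x ^ i / fact i) = exp x"
    using exp_converges[of x] by (simp_all add: sums_iff divide_inverse mult.commute)
  then show ?thesis using assms sum_le_suminf[of "\<lambda>i. x ^ i / fact i" "{k}"] by simp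
qed

lemma power_self_le_fact: "real k ^ k \<le> 3 ^ k * fact k"
proof -
  have "real k ^ k / fact k \<le> exp (real k)" by (rule power_div_fact_le_exp) simp
  also have "\<dots> = exp 1 ^ k" by (simp flip: exp_of_nat_mult)
  also have "\<dots> \<le> 3 ^ k" using exp_le by (intro power_mono) auto
  finally show ?thesis by (simp add: divide_le_eq mult.commute)
qed

lemma self_powr_le_inverse_weight:
  assumes n: "400 \<le> n"
  shows "1 / 8 * (real n / 40) powr (real n / 40) \<le> 1 / (4 * weight (n div 2)) - 1 / 2"
proof -
  define k where "k = n div 2 - 1"
  have k: "n div 2 = Suc k" "real n / 2 - 2 \<le> real k" using n unfolding k_def by linarith+
  have "(real k / 9) ^ k = real k ^ k / (3 ^ k * 3 ^ k)"
    by (simp add: power_divide flip: power_mult_distrib)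
  also have "\<dots> \<le> 3 ^ k * fact k / (3 ^ k * 3 ^ k)"
    using power_self_le_fact by (intro divide_right_mono) auto
  also have "\<dots> = 1 / weight (n div 2)" by (simp add: weight_def k)
  finally have bound: "(real k / 9) ^ k \<le> 1 / weight (n div 2)" .
  define X where "X = (real n / 40) powr (real n / 40)"
  have base: "10 \<le> real n / 40" using n by simp
  have "X \<le> (real n / 40) powr real k" unfolding X_def using base k by (intro powr_mono) auto
  also have "\<dots> \<le> (real k / 9) powr real k" using base k by (intro powr_mono2) auto
  also have "\<dots> = (real k / 9) ^ k" using k n by (simp add: powr_realpow)
  finally have "X \<le> 1 / weight (n div 2)" using bound by simp
  moreover have "(real n / 40) powr 1 \<le> X" unfolding X_def using base by (intro powr_mono) auto
  then have "4 \<le> X" using base by simp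
  ultimately show ?thesis unfolding X_def[symmetric] by (simp add: field_simps)
qed

theorem mainTheorem7:
  shows "\<exists>c::real. c > 0 \<and> (\<exists>C::real. C > 0 \<and> (\<exists>n0::nat. \<forall>n\<ge>n0.
           \<exists>adv x0. valid_adversary n adv \<and>
             expected_consensus_time n adv x0
               \<ge> ennreal (C * (real n / c) powr (real n / c))))"
proof -
  have bound: "\<exists>adv x0. valid_adversary n adv \<and>
      ennreal (1 / 8 * (real n / 40) powr (real n / 40)) \<le> expected_consensus_time n adv x0"
    if n: "400 \<le> n" for n
  proof -
    have "ennreal (1 / 8 * (real n / 40) powr (real n / 40)) \<le> ennreal (1 / (4 * weight (n div 2)) - 1 / 2)"
      using self_powr_le_inverse_weight[OF n] by (rule ennreal_leI)
    also have "\<dots> \<le> expected_consensus_time n (barbell_adversary n) (half_split n)"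
      using n by (intro expected_consensus_time_barbell) simp
    finally have "ennreal (1 / 8 * (real n / 40) powr (real n / 40))
        \<le> expected_consensus_time n (barbell_adversary n) (half_split n)" .
    moreover have "valid_adversary n (barbell_adversary n)" using n by (simp add: valid_barbell_adversary)
    ultimately show ?thesis by blast
  qed
  then have "\<forall>n\<ge>400. \<exists>adv x0. valid_adversary n adv \<and>
      expected_consensus_time n adv x0 \<ge> ennreal (1 / 8 * (real n / 40) powr (real n / 40))"
    by blast
  moreover have "(0::real) < 40" "(0::real) < 1 / 8" by simp_all
  ultimately show ?thesis by blast
qed

end
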